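(* Consider an online learner in the smoothed online classification protocol on a measure space $(\mathcal{X},\nu)$ against a $\nu$-dominated adversary, and let $A_t\subset\mathcal{X}$ be the (measurable) mistake set of the learner at time $t$, i.e. the set of $x$ with $h_t(x)\ne c(x)$. If $\nu(A_t)\to0$ almost surely, then $$\lim_{T\to\infty}\frac1T\sum_{t=1}^T\mathbb{1}\{y_t\ne\hat y_t\}=0\quad\text{almost surely}.$$
   Context: Protocol: the adversary fixes $c:\mathcal{X}\to\mathcal{Y}$; at each time $t$ it selects a distribution $\mu_t$ (possibly depending on the history) and draws $x_t\sim\mu_t$; the learner predicts $\hat y_t=h_t(x_t)$ with $h_t$ determined by past data; $y_t=c(x_t)$. $\nu$ uniformly dominates a family $\mathcal{M}$ of distributions if for all $\epsilon>0$ there is $\delta>0$ such that $\nu(A)<\delta\Rightarrow\mu(A)<\epsilon$ for all measurable $A$, $\mu\in\mathcal{M}$; a $\nu$-dominated adversary always selects $\mu_t$ from such a family. *)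

theory Defs
  imports "HOL-Probability.Probability"
begin

definition uniformly_dominates :: "'x measure \<Rightarrow> 'x measure set \<Rightarrow> bool" where
  "uniformly_dominates nu Ms \<longleftrightarrow>
     (\<forall>\<epsilon>::real. \<epsilon> > 0 \<longrightarrow> (\<exists>\<delta>::real. \<delta> > 0 \<and>
        (\<forall>A\<in>sets nu. emeasure nu A < ennreal \<delta> \<longrightarrow> (\<forall>\<mu>\<in>Ms. emeasure \<mu> A < ennreal \<epsilon>))))"

end

theory Submission
  imports Defs "HOL-Library.Discrete_Functions"
begin

(* Split the indicator of a mistake at time t into its conditional probability given the past,
   p_t = mu_t(A_t) with A_t the mistake set of h_t, and a centred remainder Z_t. Disintegrating
   the joint law of (omega, x_t) along the kernel mu_t shows that Z_t is orthogonal to every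
   bounded function of the past, so the partial sums S_T of the Z_t satisfy E[S_T^2] <= T.
   Hence the series of E[(S_(n^2) / n^2)^2] converges, S_(n^2) / n^2 -> 0 almost surely, and
   since S_T moves by at most 1 per step, S_T / T -> 0. On the other hand nu(A_t) -> 0 and
   uniform domination force p_t -> 0, so the Cesaro averages of p_t vanish as well. *)

lemma cesaro_LIMSEQ_zero:
  fixes a :: "nat \<Rightarrow> real"
  assumes "a \<longlonglongrightarrow> 0"
  shows "(\<lambda>n. (\<Sum>t<n. a t) / real n) \<longlonglongrightarrow> 0"
proof (rule LIMSEQ_I)
  fix r :: real assume r: "0 < r"
  obtain N where N: "\<And>n. n \<ge> N \<Longrightarrow> \<bar>a n\<bar> < r / 2"
    using LIMSEQ_D[OF assms, of "r / 2"] r by auto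
  define A where "A = (\<Sum>t<N. \<bar>a t\<bar>)"
  obtain N' :: nat where N': "2 * A / r < real N'"
    using reals_Archimedean2 by blast
  have "\<bar>(\<Sum>t<n. a t) / real n\<bar> < r" if n: "n \<ge> max (Suc N) N'" for n
  proof -
    have "(\<Sum>t<n. a t) = (\<Sum>t<N. a t) + (\<Sum>t\<in>{N..<n}. a t)"
      using n by (simp add: atLeast0LessThan[symmetric] sum.atLeastLessThan_concat)
    moreover have "\<bar>\<Sum>t<N. a t\<bar> \<le> A"
      unfolding A_def by (rule sum_abs)
    moreover have "\<bar>\<Sum>t\<in>{N..<n}. a t\<bar> \<le> (\<Sum>t\<in>{N..<n}. r / 2)"
      using N by (intro order_trans[OF sum_abs sum_mono]) (auto intro: less_imp_le)
    moreover have "(\<Sum>t\<in>{N..<n}. r / 2) \<le> real n * (r / 2)"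
      using r by simp
    ultimately have "\<bar>\<Sum>t<n. a t\<bar> \<le> A + real n * (r / 2)"
      by linarith
    also have "\<dots> < real n * r"
    proof -
      have "2 * A < r * real N'"
        using N' r by (simp add: field_simps)
      also have "\<dots> \<le> r * real n"
        using n r by (intro mult_left_mono) auto
      finally show ?thesis
        by (simp add: field_simps)
    qed
    finally show ?thesis
      using n by (simp add: abs_divide field_simps)
  qed
  then show "\<exists>N. \<forall>n\<ge>N. norm ((\<Sum>t<n. a t) / real n - 0) < r"
    by (intro exI[of _ "max (Suc N) N'"]) simp
qed

lemma filterlim_floor_sqrt_at_top: "filterlim floor_sqrt at_top sequentially"
  unfolding filterlim_at_top eventually_sequentially
  by (metis le_floor_sqrtI)

lemma LIMSEQ_div_of_squares:
  fixes s :: "nat \<Rightarrow> real"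
  assumes lipschitz: "\<And>m n. m \<le> n \<Longrightarrow> \<bar>s n - s m\<bar> \<le> real (n - m)"
    and squares: "(\<lambda>k. s (k\<^sup>2) / real (k\<^sup>2)) \<longlonglongrightarrow> 0"
  shows "(\<lambda>n. s n / real n) \<longlonglongrightarrow> 0"
proof (rule Lim_null_comparison)
  let ?b = "\<lambda>k. \<bar>s (k\<^sup>2) / real (k\<^sup>2)\<bar> + 2 / real k"
  have "?b \<longlonglongrightarrow> 0"
    using tendsto_add[OF tendsto_rabs_zero[OF squares] lim_const_over_n[of 2]] by simp
  then show "(\<lambda>n. ?b (floor_sqrt n)) \<longlonglongrightarrow> 0"
    by (rule filterlim_compose[OF _ filterlim_floor_sqrt_at_top])
  show "\<forall>\<^sub>F n in sequentially. norm (s n / real n) \<le> ?b (floor_sqrt n)"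
  proof (rule eventually_sequentiallyI[of 1])
    fix n :: nat assume "1 \<le> n"
    define k where "k = floor_sqrt n"
    have k: "0 < k" "k\<^sup>2 \<le> n" "n < (Suc k)\<^sup>2"
      using \<open>1 \<le> n\<close> Suc_floor_sqrt_power2_gt[of n] by (auto simp: k_def)
    have "\<bar>s n\<bar> \<le> \<bar>s (k\<^sup>2)\<bar> + real (n - k\<^sup>2)"
      using lipschitz[OF k(2)] by linarith
    also have "real (n - k\<^sup>2) \<le> 2 * real k"
      using k(3) by (simp add: power2_eq_square of_nat_diff)
    finally have "\<bar>s n\<bar> / real n \<le> (\<bar>s (k\<^sup>2)\<bar> + 2 * real k) / real (k\<^sup>2)"
      using k by (intro frac_le) (auto simp del: of_nat_power)
    then show "norm (s n / real n) \<le> ?b k"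
      using k(1) by (simp add: abs_divide add_divide_distrib power2_eq_square)
  qed
qed

lemma abs_sum_le_card:
  fixes f :: "'a \<Rightarrow> real"
  assumes "\<And>t. t \<in> A \<Longrightarrow> \<bar>f t\<bar> \<le> 1"
  shows "\<bar>sum f A\<bar> \<le> real (card A)"
  using order_trans[OF sum_abs sum_bounded_above[of A "\<lambda>t. \<bar>f t\<bar>" 1]] assms by simp

lemma (in prob_space) second_moment_sum_orthogonal_le:
  fixes Z :: "nat \<Rightarrow> 'a \<Rightarrow> real"
  assumes Z: "\<And>t. Z t \<in> borel_measurable M"
    and bounded: "\<And>t \<omega>. \<omega> \<in> space M \<Longrightarrow> \<bar>Z t \<omega>\<bar> \<le> 1"
    and orthogonal: "\<And>T. (\<integral>\<omega>. (\<Sum>t<T. Z t \<omega>) * Z T \<omega> \<partial>M) = 0"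
  shows "(\<integral>\<omega>. (\<Sum>t<T. Z t \<omega>)\<^sup>2 \<partial>M) \<le> real T"
proof (induction T)
  case 0
  then show ?case
    by simp
next
  case (Suc T)
  define S where "S \<omega> = (\<Sum>t<T. Z t \<omega>)" for \<omega>
  have S: "S \<in> borel_measurable M"
    unfolding S_def using Z by measurable
  have S_bounded: "\<bar>S \<omega>\<bar> \<le> real T" if "\<omega> \<in> space M" for \<omega>
    unfolding S_def using abs_sum_le_card[of "{..<T}" "\<lambda>t. Z t \<omega>"] bounded[OF that] by simp
  have "\<bar>(S \<omega>)\<^sup>2\<bar> \<le> (real T)\<^sup>2" if "\<omega> \<in> space M" for \<omega>
    using power_mono[OF S_bounded[OF that], of 2] by simp
  then have integrable_S2: "integrable M (\<lambda>\<omega>. (S \<omega>)\<^sup>2)"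
    using S by (intro integrable_const_bound[OF AE_I2]) auto
  have "\<bar>S \<omega> * Z T \<omega>\<bar> \<le> real T" if "\<omega> \<in> space M" for \<omega>
    using mult_mono[OF S_bounded[OF that] bounded[OF that]] by (simp add: abs_mult)
  then have integrable_SZ: "integrable M (\<lambda>\<omega>. S \<omega> * Z T \<omega>)"
    using S Z by (intro integrable_const_bound[OF AE_I2]) auto
  have Z2_le: "(Z T \<omega>)\<^sup>2 \<le> 1" if "\<omega> \<in> space M" for \<omega>
    using bounded[OF that] by (simp add: abs_square_le_1)
  then have integrable_Z2: "integrable M (\<lambda>\<omega>. (Z T \<omega>)\<^sup>2)"
    using Z by (intro integrable_const_bound[OF AE_I2]) auto
  have integral_Z2_le: "(\<integral>\<omega>. (Z T \<omega>)\<^sup>2 \<partial>M) \<le> 1"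
    using integral_mono[OF integrable_Z2 integrable_const[of 1] Z2_le] prob_space by simp
  have "(\<integral>\<omega>. (S \<omega> + Z T \<omega>)\<^sup>2 \<partial>M)
      = (\<integral>\<omega>. (S \<omega>)\<^sup>2 \<partial>M) + 2 * (\<integral>\<omega>. S \<omega> * Z T \<omega> \<partial>M) + (\<integral>\<omega>. (Z T \<omega>)\<^sup>2 \<partial>M)"
    using integrable_S2 integrable_SZ integrable_Z2 unfolding power2_sum by (simp add: mult.assoc)
  then show ?case
    using Suc orthogonal[of T] integral_Z2_le by (simp add: S_def)
qed

lemma (in prob_space) AE_LIMSEQ_zero_summable_integral:
  fixes W :: "nat \<Rightarrow> 'a \<Rightarrow> real"
  assumes W: "\<And>n. W n \<in> borel_measurable M" and nonneg: "\<And>n \<omega>. 0 \<le> W n \<omega>"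
    and integrable: "\<And>n. integrable M (W n)"
    and summable: "summable (\<lambda>n. \<integral>\<omega>. W n \<omega> \<partial>M)"
  shows "AE \<omega> in M. (\<lambda>n. W n \<omega>) \<longlonglongrightarrow> 0"
proof -
  have "(\<integral>\<^sup>+\<omega>. (\<Sum>n. ennreal (W n \<omega>)) \<partial>M) = (\<Sum>n. \<integral>\<^sup>+\<omega>. ennreal (W n \<omega>) \<partial>M)"
    using W by (intro nn_integral_suminf) measurable
  also have "\<dots> = (\<Sum>n. ennreal (\<integral>\<omega>. W n \<omega> \<partial>M))"
    using integrable nonneg by (intro suminf_cong nn_integral_eq_integral AE_I2)
  also have "\<dots> = ennreal (\<Sum>n. \<integral>\<omega>. W n \<omega> \<partial>M)"
    using nonneg summable by (intro suminf_ennreal2 Bochner_Integration.integral_nonneg)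
  finally have "(\<integral>\<^sup>+\<omega>. (\<Sum>n. ennreal (W n \<omega>)) \<partial>M) \<noteq> \<infinity>"
    by simp
  then have "AE \<omega> in M. (\<Sum>n. ennreal (W n \<omega>)) \<noteq> \<infinity>"
    using W by (intro nn_integral_PInf_AE) measurable
  then show ?thesis
  proof eventually_elim
    case (elim \<omega>)
    have "summable (\<lambda>n. W n \<omega>)"
      by (rule summable_suminf_not_top[OF nonneg]) (use elim in \<open>simp add: infinity_ennreal_def\<close>)
    then show ?case
      by (rule summable_LIMSEQ_zero)
  qed
qed

lemma (in prob_space) AE_LIMSEQ_average_orthogonal_zero:
  fixes Z :: "nat \<Rightarrow> 'a \<Rightarrow> real"
  assumes Z: "\<And>t. Z t \<in> borel_measurable M"
    and bounded: "\<And>t \<omega>. \<omega> \<in> space M \<Longrightarrow> \<bar>Z t \<omega>\<bar> \<le> 1"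
    and orthogonal: "\<And>T. (\<integral>\<omega>. (\<Sum>t<T. Z t \<omega>) * Z T \<omega> \<partial>M) = 0"
  shows "AE \<omega> in M. (\<lambda>T. (\<Sum>t<T. Z t \<omega>) / real T) \<longlonglongrightarrow> 0"
proof -
  define S where "S T \<omega> = (\<Sum>t<T. Z t \<omega>)" for T \<omega>
  define W where "W n \<omega> = (S ((Suc n)\<^sup>2) \<omega> / real ((Suc n)\<^sup>2))\<^sup>2" for n \<omega>
  have average_bounded: "\<bar>S T \<omega> / real T\<bar> \<le> 1" if "\<omega> \<in> space M" for T \<omega>
    using abs_sum_le_card[of "{..<T}" "\<lambda>t. Z t \<omega>"] bounded[OF that]
    by (cases "T = 0") (simp_all add: S_def abs_divide divide_le_eq_1)
  have W: "W n \<in> borel_measurable M" for n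
    unfolding W_def S_def using Z by measurable
  have "\<bar>W n \<omega>\<bar> \<le> 1" if "\<omega> \<in> space M" for n \<omega>
    using average_bounded[OF that, of "(Suc n)\<^sup>2"] by (simp add: W_def abs_square_le_1)
  then have integrable_W: "integrable M (W n)" for n
    using W by (intro integrable_const_bound[where B=1, OF AE_I2]) auto
  have integral_W_le: "norm (\<integral>\<omega>. W n \<omega> \<partial>M) \<le> 1 / real ((Suc n)\<^sup>2)" for n
  proof -
    have "norm (\<integral>\<omega>. W n \<omega> \<partial>M) = (\<integral>\<omega>. (S ((Suc n)\<^sup>2) \<omega>)\<^sup>2 \<partial>M) / (real ((Suc n)\<^sup>2))\<^sup>2"
      by (simp add: W_def power_divide)
    also have "\<dots> \<le> real ((Suc n)\<^sup>2) / (real ((Suc n)\<^sup>2))\<^sup>2"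
      using second_moment_sum_orthogonal_le[OF Z bounded orthogonal, of "(Suc n)\<^sup>2"]
      by (intro divide_right_mono) (simp_all add: S_def)
    also have "\<dots> = 1 / real ((Suc n)\<^sup>2)"
      by (simp add: power2_eq_square)
    finally show ?thesis .
  qed
  have "summable (\<lambda>n. 1 / real ((Suc n)\<^sup>2))"
    by (rule summable_Suc_iff[where f="\<lambda>n. 1 / real (n\<^sup>2)", THEN iffD2])
      (use inverse_power_summable[of 2, where 'a=real] in \<open>simp add: inverse_eq_divide\<close>)
  then have summable_W: "summable (\<lambda>n. \<integral>\<omega>. W n \<omega> \<partial>M)"
    by (rule summable_comparison_test') (rule integral_W_le)
  have "AE \<omega> in M. (\<lambda>n. W n \<omega>) \<longlonglongrightarrow> 0"
    by (rule AE_LIMSEQ_zero_summable_integral[OF W _ integrable_W summable_W]) (simp add: W_def)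
  then show ?thesis
  proof (rule AE_mp, intro AE_I2 impI)
    fix \<omega> assume \<omega>: "\<omega> \<in> space M" and "(\<lambda>n. W n \<omega>) \<longlonglongrightarrow> 0"
    then have "(\<lambda>n. sqrt (W n \<omega>)) \<longlonglongrightarrow> 0"
      using tendsto_real_sqrt by fastforce
    then have "(\<lambda>n. \<bar>S ((Suc n)\<^sup>2) \<omega> / real ((Suc n)\<^sup>2)\<bar>) \<longlonglongrightarrow> 0"
      by (simp add: W_def abs_divide del: of_nat_power)
    then have "(\<lambda>n. S ((Suc n)\<^sup>2) \<omega> / real ((Suc n)\<^sup>2)) \<longlonglongrightarrow> 0"
      by (rule tendsto_rabs_zero_cancel)
    then have "(\<lambda>k. S (k\<^sup>2) \<omega> / real (k\<^sup>2)) \<longlonglongrightarrow> 0"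
      by (rule LIMSEQ_imp_Suc)
    moreover have "\<bar>S n \<omega> - S m \<omega>\<bar> \<le> real (n - m)" if "m \<le> n" for m n
    proof -
      have "S n \<omega> = S m \<omega> + (\<Sum>t\<in>{m..<n}. Z t \<omega>)"
        using that by (simp add: S_def atLeast0LessThan[symmetric] sum.atLeastLessThan_concat)
      then show ?thesis
        using abs_sum_le_card[of "{m..<n}" "\<lambda>t. Z t \<omega>"] bounded[OF \<omega>] by simp
    qed
    ultimately show "(\<lambda>T. (\<Sum>t<T. Z t \<omega>) / real T) \<longlonglongrightarrow> 0"
      using LIMSEQ_div_of_squares[of "\<lambda>T. S T \<omega>"] by (simp add: S_def)
  qed
qed

lemma integral_bind_bounded:
  fixes f :: "'b \<Rightarrow> real"
  assumes f: "f \<in> borel_measurable B" and bounded: "\<And>y. y \<in> space B \<Longrightarrow> \<bar>f y\<bar> \<le> C"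
    and N: "N \<in> M \<rightarrow>\<^sub>M subprob_algebra B" and fin: "finite_measure M"
  shows "(\<integral>y. f y \<partial>(M \<bind> N)) = (\<integral>x. (\<integral>y. f y \<partial>N x) \<partial>M)"
proof (cases "space M = {}")
  case True
  then show ?thesis
    by (simp add: bind_empty Bochner_Integration.integral_empty)
next
  case False
  have "(\<integral>y. f y \<partial>(M \<bind> N)) = (\<integral>L. (\<integral>y. f y \<partial>L) \<partial>distr M (subprob_algebra B) N)"
    unfolding bind_nonempty''[OF N False]
  proof (rule integral_join[OF f bounded])
    show "finite_measure (distr M (subprob_algebra B) N)"
      using fin N by (rule finite_measure.finite_measure_distr)
    show "AE L in distr M (subprob_algebra B) N. emeasure L (space L) \<le> ennreal 1"
      by (intro AE_I2) (auto simp: space_subprob_algebra subprob_space.emeasure_space_le_1)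
    show "sets (distr M (subprob_algebra B) N) = sets (subprob_algebra B)"
      by (rule sets_distr)
  qed
  also have "\<dots> = (\<integral>x. (\<integral>y. f y \<partial>N x) \<partial>M)"
    using N f by (simp add: integral_distr)
  finally show ?thesis .
qed

lemma measurable_kernel_section_measure:
  assumes K: "K \<in> G \<rightarrow>\<^sub>M prob_algebra N" and D: "D \<in> sets (G \<Otimes>\<^sub>M N)"
  shows "(\<lambda>\<omega>. measure (K \<omega>) (Pair \<omega> -` D)) \<in> borel_measurable G"
proof (rule measure_measurable_subprob_algebra2[OF _ measurable_prob_algebraD[OF K]])
  have "D \<subseteq> space G \<times> space N"
    using sets.sets_into_space[OF D] by (simp add: space_pair_measure)
  then have "(SIGMA \<omega>:space G. Pair \<omega> -` D) = D"
    by auto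
  with D show "(SIGMA \<omega>:space G. Pair \<omega> -` D) \<in> sets (G \<Otimes>\<^sub>M N)"
    by simp
qed

locale cond_distr_kernel = prob_space M
  for M :: "'a measure" and G :: "'a measure" and N :: "'b measure"
    and X :: "'a \<Rightarrow> 'b" and K :: "'a \<Rightarrow> 'b measure" +
  assumes subalg: "subalgebra M G"
    and measurable_X: "X \<in> M \<rightarrow>\<^sub>M N"
    and kernel: "K \<in> G \<rightarrow>\<^sub>M prob_algebra N"
    and cond_law: "\<And>C B. C \<in> sets G \<Longrightarrow> B \<in> sets N \<Longrightarrow>
        measure M (C \<inter> {\<omega> \<in> space M. X \<omega> \<in> B}) = (\<integral>\<omega>. indicator C \<omega> * measure (K \<omega>) B \<partial>M)"
begin

lemma space_G: "space G = space M"
  using subalg by (simp add: subalgebra_def)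

lemma prob_space_kernel: "\<omega> \<in> space M \<Longrightarrow> prob_space (K \<omega>)"
  using measurable_space[OF kernel] by (simp add: space_G space_prob_algebra)

lemma sets_kernel: "\<omega> \<in> space M \<Longrightarrow> sets (K \<omega>) = sets N"
  using measurable_space[OF kernel] by (simp add: space_G space_prob_algebra)

lemma emeasure_kernel_eq_measure: "\<omega> \<in> space M \<Longrightarrow> emeasure (K \<omega>) A = measure (K \<omega>) A"
proof -
  assume "\<omega> \<in> space M"
  then interpret K\<omega>: prob_space "K \<omega>"
    by (rule prob_space_kernel)
  show ?thesis
    by (rule K\<omega>.emeasure_eq_measure)
qed

lemma measurable_Pair_kernel: "\<omega> \<in> space M \<Longrightarrow> Pair \<omega> \<in> K \<omega> \<rightarrow>\<^sub>M G \<Otimes>\<^sub>M N"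
  by (intro measurable_Pair measurable_const measurable_ident_sets)
    (auto simp: space_G sets_kernel)

lemma measurable_graph: "(\<lambda>\<omega>. (\<omega>, X \<omega>)) \<in> M \<rightarrow>\<^sub>M G \<Otimes>\<^sub>M N"
proof (intro measurable_Pair measurable_X)
  show "(\<lambda>\<omega>. \<omega>) \<in> M \<rightarrow>\<^sub>M G"
    using subalg by (intro measurableI) (auto simp: subalgebra_def)
qed

lemma emeasure_cond_law:
  assumes C: "C \<in> sets G" and B: "B \<in> sets N"
  shows "emeasure M (C \<inter> {\<omega> \<in> space M. X \<omega> \<in> B}) = (\<integral>\<^sup>+\<omega>. indicator C \<omega> * emeasure (K \<omega>) B \<partial>M)"
proof -
  have measurable_C: "indicator C \<in> borel_measurable M"
    using C subalg by (auto simp: subalgebra_def)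
  have measurable_KB: "(\<lambda>\<omega>. measure (K \<omega>) B) \<in> borel_measurable M"
    by (rule measurable_from_subalg[OF subalg measurable_compose[OF kernel measurable_measure_prob_algebra[OF B]]])
  have "emeasure M (C \<inter> {\<omega> \<in> space M. X \<omega> \<in> B}) = ennreal (\<integral>\<omega>. indicator C \<omega> * measure (K \<omega>) B \<partial>M)"
    using cond_law[OF C B] by (simp add: emeasure_eq_measure)
  also have "\<dots> = (\<integral>\<^sup>+\<omega>. ennreal (indicator C \<omega> * measure (K \<omega>) B) \<partial>M)"
    using prob_space_kernel
    by (intro nn_integral_eq_integral[symmetric] integrable_const_bound[where B=1] AE_I2
        borel_measurable_times measurable_C measurable_KB)
      (auto simp: indicator_def prob_space.prob_le_1)
  also have "\<dots> = (\<integral>\<^sup>+\<omega>. indicator C \<omega> * emeasure (K \<omega>) B \<partial>M)"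
    by (intro nn_integral_cong) (auto simp: indicator_def emeasure_kernel_eq_measure)
  finally show ?thesis .
qed

lemma measurable_distr_Pair_kernel:
  "(\<lambda>\<omega>. distr (K \<omega>) (G \<Otimes>\<^sub>M N) (Pair \<omega>)) \<in> G \<rightarrow>\<^sub>M subprob_algebra (G \<Otimes>\<^sub>M N)"
  by (rule measurable_distr2[OF _ measurable_prob_algebraD[OF kernel]])
    (simp add: case_prod_Pair measurable_ident)

lemma distr_graph_eq_bind:
  "distr M (G \<Otimes>\<^sub>M N) (\<lambda>\<omega>. (\<omega>, X \<omega>))
     = restr_to_subalg M G \<bind> (\<lambda>\<omega>. distr (K \<omega>) (G \<Otimes>\<^sub>M N) (Pair \<omega>))"
  (is "?Q1 = restr_to_subalg M G \<bind> ?L")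
proof -
  let ?Mt = "restr_to_subalg M G"
  have L: "?L \<in> ?Mt \<rightarrow>\<^sub>M subprob_algebra (G \<Otimes>\<^sub>M N)"
    by (rule measurable_in_subalg[OF subalg measurable_distr_Pair_kernel])
  have nonempty: "space ?Mt \<noteq> {}"
    by (simp add: space_restr_to_subalg not_empty)
  show ?thesis
  proof (rule measure_eqI_generator_eq[OF Int_stable_pair_measure_generator[of G N],
        where \<Omega>="space G \<times> space N" and A="\<lambda>_. space G \<times> space N"])
    show "{a \<times> b |a b. a \<in> sets G \<and> b \<in> sets N} \<subseteq> Pow (space G \<times> space N)"
      by (blast dest: sets.sets_into_space)
    show "sets ?Q1 = sigma_sets (space G \<times> space N) {a \<times> b |a b. a \<in> sets G \<and> b \<in> sets N}"
      by (simp add: sets_pair_measure)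
    show "sets (?Mt \<bind> ?L) = sigma_sets (space G \<times> space N) {a \<times> b |a b. a \<in> sets G \<and> b \<in> sets N}"
      using sets_bind_measurable[OF L nonempty] by (simp add: sets_pair_measure)
    show "emeasure ?Q1 (space G \<times> space N) \<noteq> \<infinity>" for i :: nat
      using measurable_graph by (simp add: emeasure_distr emeasure_eq_measure)
  next
    fix R assume "R \<in> {a \<times> b |a b. a \<in> sets G \<and> b \<in> sets N}"
    then obtain C B where R: "R = C \<times> B" and C: "C \<in> sets G" and B: "B \<in> sets N"
      by blast
    have "emeasure ?Q1 R = emeasure M (C \<inter> {\<omega> \<in> space M. X \<omega> \<in> B})"
      using measurable_graph C B unfolding R
      by (subst emeasure_distr) (auto intro!: arg_cong[where f="emeasure M"])
    also have "\<dots> = (\<integral>\<^sup>+\<omega>. indicator C \<omega> * emeasure (K \<omega>) B \<partial>M)"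
      by (rule emeasure_cond_law[OF C B])
    also have "\<dots> = (\<integral>\<^sup>+\<omega>. indicator C \<omega> * emeasure (K \<omega>) B \<partial>?Mt)"
      using C measurable_compose[OF measurable_prob_algebraD[OF kernel] measurable_emeasure_subprob_algebra[OF B]]
      by (intro nn_integral_subalgebra2[OF subalg, symmetric] borel_measurable_times_ennreal) auto
    also have "\<dots> = (\<integral>\<^sup>+\<omega>. emeasure (?L \<omega>) R \<partial>?Mt)"
    proof (intro nn_integral_cong)
      fix \<omega> assume "\<omega> \<in> space ?Mt"
      then have \<omega>: "\<omega> \<in> space M"
        by (simp add: space_restr_to_subalg)
      have "Pair \<omega> -` (C \<times> B) \<inter> space (K \<omega>) = (if \<omega> \<in> C then B else {})"
        using sets.sets_into_space[OF B] sets_eq_imp_space_eq[OF sets_kernel[OF \<omega>]] by auto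
      then show "indicator C \<omega> * emeasure (K \<omega>) B = emeasure (?L \<omega>) R"
        unfolding R using C B measurable_Pair_kernel[OF \<omega>] by (subst emeasure_distr) auto
    qed
    also have "\<dots> = emeasure (?Mt \<bind> ?L) R"
      using C B R by (subst emeasure_bind[OF nonempty L]) auto
    finally show "emeasure ?Q1 R = emeasure (?Mt \<bind> ?L) R" .
  qed auto
qed

lemma integral_graph:
  fixes f :: "'a \<times> 'b \<Rightarrow> real"
  assumes f: "f \<in> borel_measurable (G \<Otimes>\<^sub>M N)"
    and bounded: "\<And>z. z \<in> space (G \<Otimes>\<^sub>M N) \<Longrightarrow> \<bar>f z\<bar> \<le> C"
  shows "(\<integral>\<omega>. f (\<omega>, X \<omega>) \<partial>M) = (\<integral>\<omega>. (\<integral>x. f (\<omega>, x) \<partial>K \<omega>) \<partial>M)"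
proof -
  let ?L = "\<lambda>\<omega>. distr (K \<omega>) (G \<Otimes>\<^sub>M N) (Pair \<omega>)"
  have "(\<integral>\<omega>. f (\<omega>, X \<omega>) \<partial>M) = (\<integral>z. f z \<partial>(restr_to_subalg M G \<bind> ?L))"
    by (simp add: integral_distr[OF measurable_graph f, symmetric] distr_graph_eq_bind)
  also have "\<dots> = (\<integral>\<omega>. (\<integral>z. f z \<partial>?L \<omega>) \<partial>restr_to_subalg M G)"
    by (rule integral_bind_bounded[OF f bounded measurable_in_subalg[OF subalg measurable_distr_Pair_kernel]
          finite_measure_restr_to_subalg[OF subalg finite_measure_axioms]])
  also have "\<dots> = (\<integral>\<omega>. (\<integral>z. f z \<partial>?L \<omega>) \<partial>M)"
    using measurable_compose[OF measurable_distr_Pair_kernel integral_measurable_subprob_algebra[OF f]]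
    by (rule integral_subalgebra2[OF subalg])
  also have "\<dots> = (\<integral>\<omega>. (\<integral>x. f (\<omega>, x) \<partial>K \<omega>) \<partial>M)"
    by (intro Bochner_Integration.integral_cong refl)
      (simp add: integral_distr[OF measurable_Pair_kernel f])
  finally show ?thesis .
qed

lemma integral_centered_indicator_graph:
  assumes D: "D \<in> sets (G \<Otimes>\<^sub>M N)"
    and g: "g \<in> borel_measurable G" and bounded: "\<And>\<omega>. \<omega> \<in> space M \<Longrightarrow> \<bar>g \<omega>\<bar> \<le> C"
  shows "(\<integral>\<omega>. g \<omega> * (indicator D (\<omega>, X \<omega>) - measure (K \<omega>) (Pair \<omega> -` D)) \<partial>M) = 0"
proof -
  define f where "f z = g (fst z) * (indicator D z - measure (K (fst z)) (Pair (fst z) -` D))" for z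
  have f_measurable: "f \<in> borel_measurable (G \<Otimes>\<^sub>M N)"
    unfolding f_def using g D measurable_kernel_section_measure[OF kernel D] by measurable
  have "\<bar>f z\<bar> \<le> C" if "z \<in> space (G \<Otimes>\<^sub>M N)" for z
  proof -
    have \<omega>: "fst z \<in> space M"
      using that by (auto simp: space_pair_measure space_G)
    then have "\<bar>indicator D z - measure (K (fst z)) (Pair (fst z) -` D)\<bar> \<le> 1"
      using prob_space_kernel by (auto simp: indicator_def prob_space.prob_le_1)
    then have "\<bar>f z\<bar> \<le> \<bar>g (fst z)\<bar>"
      unfolding f_def abs_mult by (simp add: mult_left_le)
    also have "\<dots> \<le> C"
      using bounded[OF \<omega>] .
    finally show ?thesis .
  qed
  then have "(\<integral>\<omega>. f (\<omega>, X \<omega>) \<partial>M) = (\<integral>\<omega>. (\<integral>x. f (\<omega>, x) \<partial>K \<omega>) \<partial>M)"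
    by (rule integral_graph[OF f_measurable])
  also have "\<dots> = (\<integral>\<omega>. 0 \<partial>M)"
  proof (intro Bochner_Integration.integral_cong refl)
    fix \<omega> assume \<omega>: "\<omega> \<in> space M"
    interpret K\<omega>: prob_space "K \<omega>"
      using \<omega> by (rule prob_space_kernel)
    have section_D: "Pair \<omega> -` D \<in> sets (K \<omega>)"
      using sets_Pair1[OF D] by (simp add: sets_kernel[OF \<omega>])
    have "indicator D (\<omega>, x) = (indicator (Pair \<omega> -` D) x :: real)" for x
      by (simp add: indicator_def)
    then show "(\<integral>x. f (\<omega>, x) \<partial>K \<omega>) = 0"
      using section_D sets.sets_into_space[OF section_D] unfolding f_def
      by (simp add: K\<omega>.emeasure_eq_measure K\<omega>.prob_space Int_absorb2)
  qed
  finally show ?thesis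
    by (simp add: f_def)
qed

end

lemma AE_LIMSEQ_average_centered_indicator:
  fixes F :: "nat \<Rightarrow> 'a measure" and X :: "nat \<Rightarrow> 'a \<Rightarrow> 'b"
    and K :: "nat \<Rightarrow> 'a \<Rightarrow> 'b measure" and D :: "nat \<Rightarrow> ('a \<times> 'b) set"
  assumes kernel: "\<And>t. cond_distr_kernel M (F t) N (X t) (K t)"
    and filtration: "\<And>s t. s \<le> t \<Longrightarrow> sets (F s) \<subseteq> sets (F t)"
    and adapted: "\<And>t. X t \<in> F (Suc t) \<rightarrow>\<^sub>M N"
    and D: "\<And>t. D t \<in> sets (F t \<Otimes>\<^sub>M N)"
  shows "AE \<omega> in M. (\<lambda>T. (\<Sum>t<T. indicator (D t) (\<omega>, X t \<omega>) - measure (K t \<omega>) (Pair \<omega> -` D t)) / real T)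
           \<longlonglongrightarrow> 0"
proof -
  interpret prob_space M
    using kernel[of 0] by (rule cond_distr_kernel.axioms(1))
  define Z where "Z t \<omega> = indicator (D t) (\<omega>, X t \<omega>) - measure (K t \<omega>) (Pair \<omega> -` D t)" for t \<omega>
  have subalg: "subalgebra M (F t)" for t
    using kernel by (rule cond_distr_kernel.subalg)
  have subalg_F: "subalgebra (F t) (F s)" if "s \<le> t" for s t
    using filtration[OF that] subalg[of s] subalg[of t] by (simp add: subalgebra_def)
  have Z_F: "Z t \<in> borel_measurable (F (Suc t))" for t
  proof -
    have "(\<lambda>\<omega>. (\<omega>, X t \<omega>)) \<in> F (Suc t) \<rightarrow>\<^sub>M F t \<Otimes>\<^sub>M N"
      using measurable_from_subalg[OF subalg_F[of t "Suc t"] measurable_ident] adapted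
      by (intro measurable_Pair) (auto simp: id_def)
    moreover have "(\<lambda>\<omega>. measure (K t \<omega>) (Pair \<omega> -` D t)) \<in> borel_measurable (F (Suc t))"
      by (rule measurable_from_subalg[OF subalg_F[of t "Suc t"]
            measurable_kernel_section_measure[OF cond_distr_kernel.kernel[OF kernel] D]]) simp
    ultimately show ?thesis
      unfolding Z_def by (rule borel_measurable_diff[OF measurable_compose[OF _ borel_measurable_indicator[OF D]]])
  qed
  have Z_bounded: "\<bar>Z t \<omega>\<bar> \<le> 1" if "\<omega> \<in> space M" for t \<omega>
    using cond_distr_kernel.prob_space_kernel[OF kernel that]
    by (auto simp: Z_def indicator_def prob_space.prob_le_1)
  have orthogonal: "(\<integral>\<omega>. (\<Sum>t<T. Z t \<omega>) * Z T \<omega> \<partial>M) = 0" for T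
  proof (rule cond_distr_kernel.integral_centered_indicator_graph[OF kernel D, folded Z_def])
    show "(\<lambda>\<omega>. \<Sum>t<T. Z t \<omega>) \<in> borel_measurable (F T)"
      using measurable_from_subalg[OF subalg_F Z_F] by (intro borel_measurable_sum) simp
    show "\<bar>\<Sum>t<T. Z t \<omega>\<bar> \<le> real T" if "\<omega> \<in> space M" for \<omega>
      using abs_sum_le_card[of "{..<T}" "\<lambda>t. Z t \<omega>"] Z_bounded[OF that] by simp
  qed
  have "Z t \<in> borel_measurable M" for t
    using measurable_from_subalg[OF subalg Z_F] .
  from AE_LIMSEQ_average_orthogonal_zero[OF this Z_bounded orthogonal]
  show ?thesis
    by (simp add: Z_def)
qed

lemma AE_LIMSEQ_average_indicator_zero:
  fixes F :: "nat \<Rightarrow> 'a measure" and X :: "nat \<Rightarrow> 'a \<Rightarrow> 'b"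
    and K :: "nat \<Rightarrow> 'a \<Rightarrow> 'b measure" and D :: "nat \<Rightarrow> ('a \<times> 'b) set"
  assumes kernel: "\<And>t. cond_distr_kernel M (F t) N (X t) (K t)"
    and filtration: "\<And>s t. s \<le> t \<Longrightarrow> sets (F s) \<subseteq> sets (F t)"
    and adapted: "\<And>t. X t \<in> F (Suc t) \<rightarrow>\<^sub>M N"
    and D: "\<And>t. D t \<in> sets (F t \<Otimes>\<^sub>M N)"
    and vanishing: "AE \<omega> in M. (\<lambda>t. measure (K t \<omega>) (Pair \<omega> -` D t)) \<longlonglongrightarrow> 0"
  shows "AE \<omega> in M. (\<lambda>T. (\<Sum>t<T. indicator (D t) (\<omega>, X t \<omega>)) / real T) \<longlonglongrightarrow> 0"
proof -
  let ?p = "\<lambda>t \<omega>. measure (K t \<omega>) (Pair \<omega> -` D t)"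
  have "AE \<omega> in M. (\<lambda>T. (\<Sum>t<T. indicator (D t) (\<omega>, X t \<omega>) - ?p t \<omega>) / real T) \<longlonglongrightarrow> 0"
    by (rule AE_LIMSEQ_average_centered_indicator) (use kernel filtration adapted D in auto)
  from this vanishing show ?thesis
  proof (rule AE_mp[OF AE_conjI], intro AE_I2 impI)
    fix \<omega> assume limits: "(\<lambda>T. (\<Sum>t<T. indicator (D t) (\<omega>, X t \<omega>) - ?p t \<omega>) / real T) \<longlonglongrightarrow> 0 \<and>
      (\<lambda>t. ?p t \<omega>) \<longlonglongrightarrow> 0"
    show "(\<lambda>T. (\<Sum>t<T. indicator (D t) (\<omega>, X t \<omega>)) / real T) \<longlonglongrightarrow> 0"
      using tendsto_add_zero[OF conjunct1[OF limits] cesaro_LIMSEQ_zero[OF conjunct2[OF limits]]]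
      by (simp add: sum_subtractf diff_divide_distrib)
  qed
qed

lemma uniformly_dominates_LIMSEQ_measure:
  assumes dom: "uniformly_dominates nu Ms"
    and A: "\<And>t. A t \<in> sets nu" and mu: "\<And>t. mu t \<in> Ms"
    and small: "(\<lambda>t. emeasure nu (A t)) \<longlonglongrightarrow> 0"
  shows "(\<lambda>t. measure (mu t) (A t)) \<longlonglongrightarrow> 0"
proof (rule LIMSEQ_I)
  fix r :: real assume "0 < r"
  then obtain \<delta> where "0 < \<delta>"
    and \<delta>: "\<And>B \<mu>. B \<in> sets nu \<Longrightarrow> emeasure nu B < ennreal \<delta> \<Longrightarrow> \<mu> \<in> Ms \<Longrightarrow> emeasure \<mu> B < ennreal r"
    using dom unfolding uniformly_dominates_def by blast
  then obtain T where T: "\<And>t. T \<le> t \<Longrightarrow> emeasure nu (A t) < ennreal \<delta>"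
    using order_tendstoD(2)[OF small, of "ennreal \<delta>"] by (auto simp: eventually_sequentially)
  have "measure (mu t) (A t) < r" if "T \<le> t" for t
  proof -
    have "emeasure (mu t) (A t) < ennreal r"
      using \<delta>[OF A T[OF that] mu] .
    moreover from this have "emeasure (mu t) (A t) < top"
      using ennreal_less_top order.strict_trans by blast
    ultimately show ?thesis
      by (simp add: measure_def)
  qed
  then show "\<exists>T. \<forall>t\<ge>T. norm (measure (mu t) (A t) - 0) < r"
    by auto
qed

theorem mainTheorem15:
  fixes M :: "'w measure" and F :: "nat \<Rightarrow> 'w measure" and nu :: "'x measure"
    and xs :: "nat \<Rightarrow> 'w \<Rightarrow> 'x" and mu :: "nat \<Rightarrow> 'w \<Rightarrow> 'x measure"
    and c :: "'x \<Rightarrow> 'y" and h :: "nat \<Rightarrow> 'w \<Rightarrow> 'x \<Rightarrow> 'y" and Ms :: "'x measure set"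
  assumes prob: "prob_space M"
    and filt_sub: "\<And>t. subalgebra M (F t)"
    and filt_mono: "\<And>s t. s \<le> t \<Longrightarrow> sets (F s) \<subseteq> sets (F t)"
    and adapted: "\<And>t. xs t \<in> F (Suc t) \<rightarrow>\<^sub>M nu"
    and dom: "uniformly_dominates nu Ms"
    and adv_dom: "\<And>t \<omega>. \<omega> \<in> space M \<Longrightarrow> mu t \<omega> \<in> Ms"
    and adv_kernel: "\<And>t. mu t \<in> F t \<rightarrow>\<^sub>M prob_algebra nu"
    and cond_law: "\<And>t C B. C \<in> sets (F t) \<Longrightarrow> B \<in> sets nu \<Longrightarrow>
        measure M (C \<inter> {\<omega> \<in> space M. xs t \<omega> \<in> B})
          = (\<integral>\<omega>. indicator C \<omega> * measure (mu t \<omega>) B \<partial>M)"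
    and learner_past: "\<And>t \<omega> \<omega>'. \<omega> \<in> space M \<Longrightarrow> \<omega>' \<in> space M \<Longrightarrow>
        (\<forall>s<t. xs s \<omega> = xs s \<omega>') \<Longrightarrow> h t \<omega> = h t \<omega>'"
    and mistake_meas: "\<And>t. {(\<omega>, x) \<in> space M \<times> space nu. h t \<omega> x \<noteq> c x} \<in> sets (F t \<Otimes>\<^sub>M nu)"
    and small: "AE \<omega> in M. (\<lambda>t. emeasure nu {x \<in> space nu. h t \<omega> x \<noteq> c x}) \<longlonglongrightarrow> 0"
  shows "AE \<omega> in M. (\<lambda>T. (\<Sum>t<T. if c (xs t \<omega>) \<noteq> h t \<omega> (xs t \<omega>) then 1 else 0) / real T)
           \<longlonglongrightarrow> (0::real)"
proof -
  define D where "D t = {(\<omega>, x) \<in> space M \<times> space nu. h t \<omega> x \<noteq> c x}" for t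
  have kernel: "cond_distr_kernel M (F t) nu (xs t) (mu t)" for t
    using prob filt_sub measurable_from_subalg[OF filt_sub adapted] adv_kernel cond_law
    by (simp add: cond_distr_kernel_def cond_distr_kernel_axioms_def)
  have D_meas: "D t \<in> sets (F t \<Otimes>\<^sub>M nu)" for t
    unfolding D_def by (rule mistake_meas)
  have mistake_prob: "AE \<omega> in M. (\<lambda>t. measure (mu t \<omega>) (Pair \<omega> -` D t)) \<longlonglongrightarrow> 0"
    using small
  proof (rule AE_mp, intro AE_I2 impI)
    fix \<omega> assume \<omega>: "\<omega> \<in> space M"
    have "Pair \<omega> -` D t = {x \<in> space nu. h t \<omega> x \<noteq> c x}" for t
      using \<omega> by (auto simp: D_def)
    moreover have "Pair \<omega> -` D t \<in> sets nu" for t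
      using sets_Pair1[OF D_meas] by simp
    ultimately show "(\<lambda>t. emeasure nu {x \<in> space nu. h t \<omega> x \<noteq> c x}) \<longlonglongrightarrow> 0 \<Longrightarrow>
        (\<lambda>t. measure (mu t \<omega>) (Pair \<omega> -` D t)) \<longlonglongrightarrow> 0"
      using uniformly_dominates_LIMSEQ_measure[OF dom _ adv_dom[OF \<omega>]] by simp
  qed
  have "AE \<omega> in M. (\<lambda>T. (\<Sum>t<T. indicator (D t) (\<omega>, xs t \<omega>)) / real T) \<longlonglongrightarrow> (0::real)"
    using AE_LIMSEQ_average_indicator_zero[where F=F and X=xs and K=mu and D=D,
        OF kernel filt_mono adapted D_meas mistake_prob] .
  then show ?thesis
  proof (rule AE_mp, intro AE_I2 impI)
    fix \<omega> assume \<omega>: "\<omega> \<in> space M"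
    have "(if c (xs t \<omega>) \<noteq> h t \<omega> (xs t \<omega>) then 1 else 0) = (indicator (D t) (\<omega>, xs t \<omega>) :: real)" for t
      using \<omega> measurable_space[OF measurable_from_subalg[OF filt_sub adapted] \<omega>]
      by (auto simp: D_def indicator_def)
    then show "(\<lambda>T. (\<Sum>t<T. indicator (D t) (\<omega>, xs t \<omega>)) / real T) \<longlonglongrightarrow> 0 \<Longrightarrow>
        (\<lambda>T. (\<Sum>t<T. if c (xs t \<omega>) \<noteq> h t \<omega> (xs t \<omega>) then 1 else 0) / real T) \<longlonglongrightarrow> (0::real)"
      by simp
  qed
qed

end
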